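(* Let $S=K[x_1,\dots,x_n]$, let $I\subset S$ be an ideal generated by monomials of degree $\le d$, $R=S/I$, and let $c\ge1$ be an integer with $c\ge d-1$. Let $X$ be the set of residue classes in $R$ of the monomials of degree $c$ not in $I$ (a basis of $(R^{(c)})_1$) and $\mathcal F=\{(Y):Y\subseteq X\}$, a Koszul filtration of $R^{(c)}$. Then for every $u=0,\dots,c-1$ the Veronese module $V_u=\bigoplus_jR_{u+jc}$ has linear quotients with respect to $\mathcal F$ (in particular $V_u$ has a linear resolution over $R^{(c)}$).
   Context: $R^{(c)}=\bigoplus_jR_{jc}$ is standard graded with $R_{jc}$ in degree $j$, and $V_u$ is the graded $R^{(c)}$-module with degree-$j$ component $R_{u+jc}$. A Koszul filtration of a standard graded algebra $A$ is a set $\mathcal F$ of ideals such that: (i) each $I\in\mathcal F$ is generated in degree $1$; (ii) $0,\mathfrak m_A\in\mathcal F$; (iii) for every $I\in\mathcal F$, $I\ne0$, there is $J\in\mathcal F$ with $J\subset I$, $I/J$ cyclic and $J:I\in\mathcal F$. A module $M$ has linear quotients with respect to $\mathcal F$ if it is minimally generated by homogeneous $m_1,\dots,m_v$ with $\langle m_1,\dots,m_{i-1}\rangle:_Am_i\in\mathcal F$ for all $i$. A module generated in a single degree $e$ has a linear resolution if its regularity $\sup_i\{t_i^A(M)-i\}$ equals $e$, where $t_i^A(M)=\sup\{j:\operatorname{Tor}_i^A(M,K)_j\neq0\}$. *)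

theory Defs
  imports "HOL-Library.Poly_Mapping"
begin

text \<open>Polynomial ring S = K[x_v : v in 'v] ('v finite, n = CARD('v)) modelled as
  finitely supported functions from monomials (exponent vectors 'v =>0 nat) to K.\<close>

type_synonym ('v, 'k) mpoly = "('v \<Rightarrow>\<^sub>0 nat) \<Rightarrow>\<^sub>0 'k"

definition mdeg :: "('v \<Rightarrow>\<^sub>0 nat) \<Rightarrow> nat" where
  "mdeg m = (\<Sum>v\<in>Poly_Mapping.keys m. Poly_Mapping.lookup m v)"

definition mon :: "('v \<Rightarrow>\<^sub>0 nat) \<Rightarrow> ('v, 'k::field) mpoly" where
  "mon m = Poly_Mapping.single m 1"

text \<open>A-linear span of B inside S: finite combinations with coefficients in A.
  With A = UNIV this is the ideal of S generated by B.\<close>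
definition lin_span :: "('v, 'k::field) mpoly set \<Rightarrow> ('v, 'k) mpoly set \<Rightarrow> ('v, 'k) mpoly set" where
  "lin_span A B = {x. \<exists>F c. finite F \<and> F \<subseteq> B \<and> (\<forall>b\<in>F. c b \<in> A) \<and> x = (\<Sum>b\<in>F. c b * b)}"

definition set_plus_mp :: "('v, 'k::field) mpoly set \<Rightarrow> ('v, 'k) mpoly set \<Rightarrow> ('v, 'k) mpoly set" where
  "set_plus_mp A B = {a + b | a b. a \<in> A \<and> b \<in> B}"

definition homogeneous :: "nat \<Rightarrow> ('v, 'k::field) mpoly \<Rightarrow> bool" where
  "homogeneous e f \<longleftrightarrow> (\<forall>m\<in>Poly_Mapping.keys f. mdeg m = e)"

text \<open>For c \<ge> 1: veronese_part c 0 represents S^(c) (hence R^(c) modulo I), and for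
  u < c, veronese_part c u represents the Veronese module V_u (modulo I).\<close>
definition veronese_part :: "nat \<Rightarrow> nat \<Rightarrow> ('v, 'k::field) mpoly set" where
  "veronese_part c u = {f. \<forall>m\<in>Poly_Mapping.keys f. mdeg m mod c = u}"

text \<open>Residue classes in R = S/I are represented by polynomials; a set of
  representatives of an ideal / submodule of R is saturated by adding I.
  R^(c)-submodule of R generated by B (plus I): \<close>
definition vspan :: "nat \<Rightarrow> ('v, 'k::field) mpoly set \<Rightarrow> ('v, 'k) mpoly set \<Rightarrow> ('v, 'k) mpoly set" where
  "vspan c I B = set_plus_mp (lin_span (veronese_part c 0) B) I"

text \<open>Colon ideal <ms_0,...,ms_{i-1}> :_{R^(c)} ms_i, as representatives in S^(c).\<close>
definition colon_rep :: "nat \<Rightarrow> ('v, 'k::field) mpoly set \<Rightarrow> ('v, 'k) mpoly list \<Rightarrow> nat \<Rightarrow> ('v, 'k) mpoly set" where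
  "colon_rep c I ms i = {r \<in> veronese_part c 0. r * ms ! i \<in> vspan c I (set (take i ms))}"

definition ideal_rep :: "nat \<Rightarrow> ('v, 'k::field) mpoly set \<Rightarrow> ('v, 'k) mpoly set \<Rightarrow> ('v, 'k) mpoly set" where
  "ideal_rep c I Y = {r \<in> veronese_part c 0. r \<in> vspan c I Y}"

definition Xset :: "nat \<Rightarrow> ('v, 'k::field) mpoly set \<Rightarrow> ('v, 'k) mpoly set" where
  "Xset c I = {mon m | m. mdeg m = c \<and> mon m \<notin> I}"

definition minimal_hom_generators ::
  "nat \<Rightarrow> nat \<Rightarrow> ('v, 'k::field) mpoly set \<Rightarrow> ('v, 'k) mpoly list \<Rightarrow> bool" where
  "minimal_hom_generators c u I ms \<longleftrightarrow>
     (\<forall>g\<in>set ms. (\<exists>e. homogeneous e g) \<and> g \<in> veronese_part c u) \<and>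
     veronese_part c u \<subseteq> vspan c I (set ms) \<and>
     (\<forall>i<length ms. \<not> veronese_part c u \<subseteq> vspan c I {ms ! j | j. j < length ms \<and> j \<noteq> i})"

definition veronese_linear_quotients :: "nat \<Rightarrow> nat \<Rightarrow> ('v, 'k::field) mpoly set \<Rightarrow> bool" where
  "veronese_linear_quotients c u I \<longleftrightarrow>
     (\<exists>ms. minimal_hom_generators c u I ms \<and>
        (\<forall>i<length ms. \<exists>Y\<subseteq>Xset c I. colon_rep c I ms i = ideal_rep c I Y))"

end

theory Submission
  imports Defs "HOL-Library.FuncSet" "HOL-Library.Set_Algebras"
begin

text \<open>All modules involved (I, the Veronese pieces, the colon ideals) are spanned by monomials, so
  the statement is a statement about exponent vectors. Order the standard monomials of degree u
  (those not in I) by decreasing weight for an injective weight vector on the variables. Suppose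
  w, of degree divisible by c, multiplies the generator b into I or into the span of the earlier
  generators; then already some divisor y of w of degree c does. If w b is divisible by a
  generator g of I, then g/gcd(g,b) has degree at most c since deg g \<le> c + 1, and y is any degree
  c divisor of w containing it. If w b is divisible by an earlier generator a, a variable x_t with
  a_t > b_t divides w, and there is a variable x_s of smaller weight with a_s < b_s; then
  b x_t / x_s has larger weight than b, so it lies in I or is an earlier generator, and y is any
  degree c divisor of w containing x_t. Hence each colon ideal is generated by standard monomials
  of degree c.\<close>

definition supported_in :: "('v \<Rightarrow>\<^sub>0 nat) set \<Rightarrow> ('v, 'k::field) mpoly set" where
  "supported_in E = {f. Poly_Mapping.keys f \<subseteq> E}"

lemma supported_in_UNIV [simp]: "supported_in UNIV = UNIV"
  by (simp add: supported_in_def)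

lemma keys_mon: "Poly_Mapping.keys (mon m :: ('v, 'k::field) mpoly) = {m}"
  by (simp add: mon_def)

lemma mon_in_supported_in [simp]: "mon m \<in> supported_in E \<longleftrightarrow> m \<in> E"
  by (simp add: supported_in_def keys_mon)

lemma supported_in_mono: "E \<subseteq> F \<Longrightarrow> supported_in E \<subseteq> supported_in F"
  by (auto simp: supported_in_def)

lemma supported_in_Int: "{f \<in> supported_in A. f \<in> supported_in B} = supported_in (A \<inter> B)"
  by (auto simp: supported_in_def)

lemma poly_mapping_sum_single:
  "(f :: 'a \<Rightarrow>\<^sub>0 'b::comm_monoid_add) =
     (\<Sum>k\<in>Poly_Mapping.keys f. Poly_Mapping.single k (Poly_Mapping.lookup f k))"
  by (rule poly_mapping_eqI) (simp add: lookup_sum lookup_single when_def in_keys_iff)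

lemma keys_sum_single_subset: "Poly_Mapping.keys (\<Sum>k\<in>S. Poly_Mapping.single k (h k)) \<subseteq> S"
  using keys_sum[of "\<lambda>k. Poly_Mapping.single k (h k)" S] by auto

lemma lookup_times_mon:
  "Poly_Mapping.lookup ((r :: ('v, 'k::field) mpoly) * mon m) (k + m) = Poly_Mapping.lookup r k"
proof -
  have "r * mon m =
      (\<Sum>k'\<in>Poly_Mapping.keys r. Poly_Mapping.single (k' + m) (Poly_Mapping.lookup r k'))"
    unfolding mon_def by (subst poly_mapping_sum_single[of r]) (simp add: sum_distrib_right mult_single)
  then have "Poly_Mapping.lookup (r * mon m) (k + m) =
      (\<Sum>k'\<in>Poly_Mapping.keys r. Poly_Mapping.lookup r k' when k' = k)"
    by (simp add: lookup_sum lookup_single)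
  then show ?thesis
    by (simp add: when_def in_keys_iff)
qed

lemma keys_times_mon:
  "Poly_Mapping.keys ((r :: ('v, 'k::field) mpoly) * mon m) = (\<lambda>k. k + m) ` Poly_Mapping.keys r"
proof
  show "Poly_Mapping.keys (r * mon m) \<subseteq> (\<lambda>k. k + m) ` Poly_Mapping.keys r"
    using keys_mult[of r "mon m"] by (auto simp: keys_mon)
  show "(\<lambda>k. k + m) ` Poly_Mapping.keys r \<subseteq> Poly_Mapping.keys (r * mon m)"
    by (auto simp: in_keys_iff lookup_times_mon)
qed

lemma times_mon_in_supported_in:
  "{r \<in> supported_in D. r * mon b \<in> supported_in E} =
     (supported_in {w \<in> D. w + b \<in> E} :: ('v, 'k::field) mpoly set)"
  by (auto simp: supported_in_def keys_times_mon)

lemma set_plus_mp_supported_in: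
  "set_plus_mp (supported_in E1) (supported_in E2) =
     (supported_in (E1 \<union> E2) :: ('v, 'k::field) mpoly set)"
proof
  show "set_plus_mp (supported_in E1) (supported_in E2) \<subseteq> (supported_in (E1 \<union> E2) :: ('v, 'k) mpoly set)"
    using keys_add by (fastforce simp: set_plus_mp_def supported_in_def)
next
  show "supported_in (E1 \<union> E2) \<subseteq> (set_plus_mp (supported_in E1) (supported_in E2) :: ('v, 'k) mpoly set)"
  proof
    fix f :: "('v, 'k) mpoly"
    assume f: "f \<in> supported_in (E1 \<union> E2)"
    let ?part = "\<lambda>S. \<Sum>k\<in>S. Poly_Mapping.single k (Poly_Mapping.lookup f k)"
    have "f = ?part (Poly_Mapping.keys f \<inter> E1) + ?part (Poly_Mapping.keys f - E1)"
      by (subst poly_mapping_sum_single) (rule sum.Int_Diff[OF finite_keys])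
    moreover have "?part (Poly_Mapping.keys f \<inter> E1) \<in> supported_in E1"
      using keys_sum_single_subset by (fastforce simp: supported_in_def)
    moreover have "?part (Poly_Mapping.keys f - E1) \<in> supported_in E2"
      using f keys_sum_single_subset by (fastforce simp: supported_in_def)
    ultimately show "f \<in> set_plus_mp (supported_in E1) (supported_in E2)"
      unfolding set_plus_mp_def by blast
  qed
qed

lemma lin_span_zero: "0 \<in> lin_span A B"
  unfolding lin_span_def by (intro CollectI exI[of _ "{}"]) auto

lemma lin_span_single: "a \<in> A \<Longrightarrow> b \<in> B \<Longrightarrow> a * b \<in> lin_span A B"
  unfolding lin_span_def by (intro CollectI exI[of _ "{b}"] exI[of _ "\<lambda>_. a"]) auto

lemma lin_span_add:
  fixes A B :: "('v, 'k::field) mpoly set"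
  assumes A_zero: "0 \<in> A" and A_add: "\<And>x y. x \<in> A \<Longrightarrow> y \<in> A \<Longrightarrow> x + y \<in> A"
    and "x \<in> lin_span A B" and "y \<in> lin_span A B"
  shows "x + y \<in> lin_span A B"
proof -
  obtain F1 c1 where F1: "finite F1" "F1 \<subseteq> B" "\<forall>b\<in>F1. c1 b \<in> A" "x = (\<Sum>b\<in>F1. c1 b * b)"
    using \<open>x \<in> lin_span A B\<close> unfolding lin_span_def by blast
  obtain F2 c2 where F2: "finite F2" "F2 \<subseteq> B" "\<forall>b\<in>F2. c2 b \<in> A" "y = (\<Sum>b\<in>F2. c2 b * b)"
    using \<open>y \<in> lin_span A B\<close> unfolding lin_span_def by blast
  define ext where "ext F c b = (if b \<in> F then c b else 0)" for F and c :: "('v, 'k) mpoly \<Rightarrow> ('v, 'k) mpoly" and b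
  have sum_ext: "(\<Sum>b\<in>F1 \<union> F2. ext F c b * b) = (\<Sum>b\<in>F. c b * b)" if "F \<subseteq> F1 \<union> F2" for F c
  proof -
    have "(\<Sum>b\<in>F1 \<union> F2. ext F c b * b) = (\<Sum>b\<in>F1 \<union> F2. if b \<in> F then c b * b else 0)"
      by (intro sum.cong) (auto simp: ext_def)
    also have "\<dots> = (\<Sum>b\<in>(F1 \<union> F2) \<inter> F. c b * b)"
      using F1(1) F2(1) by (simp add: sum.inter_restrict)
    finally show ?thesis
      using that by (simp add: Int_absorb1)
  qed
  have "x + y = (\<Sum>b\<in>F1 \<union> F2. (ext F1 c1 b + ext F2 c2 b) * b)"
    using sum_ext[of F1 c1] sum_ext[of F2 c2] F1(4) F2(4) by (simp add: distrib_right sum.distrib)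
  moreover have "\<forall>b\<in>F1 \<union> F2. ext F1 c1 b + ext F2 c2 b \<in> A"
    using F1(3) F2(3) A_zero by (auto simp: ext_def intro: A_add)
  ultimately show ?thesis
    unfolding lin_span_def using F1(1,2) F2(1,2)
    by (intro CollectI exI[of _ "F1 \<union> F2"] exI[of _ "\<lambda>b. ext F1 c1 b + ext F2 c2 b"]) auto
qed

lemma lin_span_sum:
  assumes "0 \<in> A" and "\<And>x y. x \<in> A \<Longrightarrow> y \<in> A \<Longrightarrow> x + y \<in> A"
  shows "finite S \<Longrightarrow> (\<And>s. s \<in> S \<Longrightarrow> f s \<in> lin_span A B) \<Longrightarrow> sum f S \<in> lin_span A B"
  by (induction S rule: finite_induct) (auto intro: lin_span_zero lin_span_add[OF assms])

lemma lin_span_supported_in_mon: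
  "lin_span (supported_in D) (mon ` B) = (supported_in (D + B) :: ('v, 'k::field) mpoly set)"
proof
  show "lin_span (supported_in D) (mon ` B) \<subseteq> (supported_in (D + B) :: ('v, 'k) mpoly set)"
  proof
    fix x :: "('v, 'k) mpoly"
    assume "x \<in> lin_span (supported_in D) (mon ` B)"
    then obtain F c where F: "F \<subseteq> mon ` B" "\<forall>b\<in>F. c b \<in> supported_in D" "x = (\<Sum>b\<in>F. c b * b)"
      unfolding lin_span_def by blast
    have "Poly_Mapping.keys (c b * b) \<subseteq> D + B" if "b \<in> F" for b
      using F(1,2) that by (force simp: supported_in_def keys_times_mon)
    then show "x \<in> supported_in (D + B)"
      using keys_sum[of "\<lambda>b. c b * b" F] F(3) unfolding supported_in_def by blast
  qed
next
  show "supported_in (D + B) \<subseteq> (lin_span (supported_in D) (mon ` B) :: ('v, 'k) mpoly set)"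
  proof
    fix f :: "('v, 'k) mpoly"
    assume f: "f \<in> supported_in (D + B)"
    have "Poly_Mapping.single k (Poly_Mapping.lookup f k) \<in> lin_span (supported_in D) (mon ` B)"
      if "k \<in> Poly_Mapping.keys f" for k
    proof -
      from that f obtain k' b where kb: "k = k' + b" "k' \<in> D" "b \<in> B"
        unfolding supported_in_def by (blast elim: set_plus_elim)
      have "Poly_Mapping.single k (Poly_Mapping.lookup f k) =
          Poly_Mapping.single k' (Poly_Mapping.lookup f k) * mon b"
        by (simp add: mon_def mult_single kb)
      then show ?thesis
        using kb by (simp add: lin_span_single supported_in_def)
    qed
    moreover have "0 \<in> supported_in D"
      by (simp add: supported_in_def)
    moreover have "p + q \<in> supported_in D" if "p \<in> supported_in D" "q \<in> supported_in D" for p q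
      using that keys_add[of p q] by (auto simp: supported_in_def)
    ultimately show "f \<in> lin_span (supported_in D) (mon ` B)"
      by (subst poly_mapping_sum_single) (rule lin_span_sum; simp)
  qed
qed

definition mdvd :: "('v \<Rightarrow>\<^sub>0 nat) \<Rightarrow> ('v \<Rightarrow>\<^sub>0 nat) \<Rightarrow> bool" (infix \<open>mdvd\<close> 50) where
  "a mdvd b \<longleftrightarrow> (\<forall>v. Poly_Mapping.lookup a v \<le> Poly_Mapping.lookup b v)"

lemma mdvd_refl [simp]: "a mdvd a"
  by (simp add: mdvd_def)

lemma mdvd_add_left [simp]: "a mdvd k + a"
  by (simp add: mdvd_def lookup_add)

lemma mdvd_trans: "a mdvd b \<Longrightarrow> b mdvd c \<Longrightarrow> a mdvd c"
  unfolding mdvd_def using order_trans by blast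

lemma mdvd_diff_add: "a mdvd b \<Longrightarrow> (b - a) + a = b"
  unfolding mdvd_def by (intro poly_mapping_eqI) (simp add: lookup_add lookup_minus)

lemma mdvd_iff: "a mdvd b \<longleftrightarrow> (\<exists>k. b = k + a)"
  by (metis mdvd_add_left mdvd_diff_add)

lemma mdeg_eq_sum_UNIV: "mdeg (m :: 'v::finite \<Rightarrow>\<^sub>0 nat) = (\<Sum>v\<in>UNIV. Poly_Mapping.lookup m v)"
  unfolding mdeg_def by (rule sum.mono_neutral_left) (auto simp: in_keys_iff)

lemma mdeg_add: "mdeg ((a :: 'v::finite \<Rightarrow>\<^sub>0 nat) + b) = mdeg a + mdeg b"
  by (simp add: mdeg_eq_sum_UNIV lookup_add sum.distrib)

lemma mdeg_zero [simp]: "mdeg 0 = 0"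
  by (simp add: mdeg_def)

lemma mdeg_single_1: "mdeg (Poly_Mapping.single v (1::nat)) = 1"
  by (simp add: mdeg_def lookup_single)

lemma mdeg_eq_0_iff [simp]: "mdeg (m :: 'v::finite \<Rightarrow>\<^sub>0 nat) = 0 \<longleftrightarrow> m = 0"
  by (auto simp: mdeg_eq_sum_UNIV poly_mapping_eqI)

lemma mdvd_mdeg_le: "a mdvd b \<Longrightarrow> mdeg (a :: 'v::finite \<Rightarrow>\<^sub>0 nat) \<le> mdeg b"
  by (metis le_add2 mdeg_add mdvd_iff)

lemma mdvd_mdeg_eq_imp_eq: "a mdvd b \<Longrightarrow> mdeg (a :: 'v::finite \<Rightarrow>\<^sub>0 nat) = mdeg b \<Longrightarrow> a = b"
  by (metis add_0 add_cancel_right_left mdeg_add mdeg_eq_0_iff mdvd_iff)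

lemma dvd_mdeg_imp_le: "c dvd mdeg (w :: 'v::finite \<Rightarrow>\<^sub>0 nat) \<Longrightarrow> w \<noteq> 0 \<Longrightarrow> c \<le> mdeg w"
  using dvd_imp_le[of c "mdeg w"] by (simp add: zero_less_iff_neq_zero)

lemma exists_mdvd_between:
  fixes h w :: "'v::finite \<Rightarrow>\<^sub>0 nat"
  shows "h mdvd w \<Longrightarrow> mdeg h \<le> e \<Longrightarrow> e \<le> mdeg w \<Longrightarrow> \<exists>y. h mdvd y \<and> y mdvd w \<and> mdeg y = e"
proof (induction "e - mdeg h" arbitrary: h)
  case 0
  then show ?case
    by (intro exI[of _ h]) simp
next
  case (Suc n)
  then have "h \<noteq> w"
    by auto
  then obtain v where v: "Poly_Mapping.lookup h v < Poly_Mapping.lookup w v"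
    using Suc.prems(1) unfolding mdvd_def by (metis le_neq_implies_less poly_mapping_eqI)
  define h' where "h' = Poly_Mapping.single v 1 + h"
  have "h' mdvd w"
    using Suc.prems(1) v unfolding mdvd_def h'_def by (auto simp: lookup_add lookup_single when_def)
  moreover have "mdeg h' = mdeg h + 1"
    unfolding h'_def mdeg_add mdeg_single_1 by simp
  ultimately obtain y where "h' mdvd y" "y mdvd w" "mdeg y = e"
    using Suc by (metis Suc_diff_Suc Suc_eq_plus1 Suc_le_eq diff_Suc_1 zero_less_Suc zero_less_diff)
  then show ?case
    using mdvd_trans[OF mdvd_add_left[of h] \<open>h' mdvd y\<close>[unfolded h'_def]] by blast
qed

lemma finite_mdeg_eq: "finite {m :: 'v::finite \<Rightarrow>\<^sub>0 nat. mdeg m = u}"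
proof -
  have "Poly_Mapping.lookup m v \<le> mdeg m" for m :: "'v \<Rightarrow>\<^sub>0 nat" and v
    unfolding mdeg_eq_sum_UNIV by (rule member_le_sum) simp_all
  then have "Poly_Mapping.lookup ` {m :: 'v \<Rightarrow>\<^sub>0 nat. mdeg m = u} \<subseteq> (\<Pi>\<^sub>E v\<in>UNIV. {..u})"
    by (auto simp: PiE_UNIV_domain)
  then have "finite (Poly_Mapping.lookup ` {m :: 'v \<Rightarrow>\<^sub>0 nat. mdeg m = u})"
    by (rule finite_subset) (simp add: finite_PiE)
  moreover have "inj_on Poly_Mapping.lookup {m :: 'v \<Rightarrow>\<^sub>0 nat. mdeg m = u}"
    by (rule inj_onI) (simp add: poly_mapping_eqI)
  ultimately show ?thesis
    by (rule finite_imageD)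
qed

definition weight :: "('v \<Rightarrow> nat) \<Rightarrow> ('v \<Rightarrow>\<^sub>0 nat) \<Rightarrow> nat" where
  "weight \<omega> m = (\<Sum>v\<in>UNIV. Poly_Mapping.lookup m v * \<omega> v)"

lemma weight_add: "weight \<omega> ((a :: 'v::finite \<Rightarrow>\<^sub>0 nat) + b) = weight \<omega> a + weight \<omega> b"
  by (simp add: weight_def lookup_add sum.distrib distrib_right)

lemma weight_single_1: "weight \<omega> (Poly_Mapping.single (v :: 'v::finite) 1) = \<omega> v"
proof -
  have "Poly_Mapping.lookup (Poly_Mapping.single v 1) x * \<omega> x = (if v = x then \<omega> v else 0)" for x
    by (simp add: lookup_single when_def)
  then show ?thesis
    by (simp add: weight_def)
qed

lemma exists_exchange_pair:
  fixes a b :: "'v::finite \<Rightarrow>\<^sub>0 nat"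
  assumes "inj \<omega>" and "mdeg a = mdeg b" and "a \<noteq> b" and "weight \<omega> b \<le> weight \<omega> a"
  shows "\<exists>t s. Poly_Mapping.lookup b t < Poly_Mapping.lookup a t \<and>
    Poly_Mapping.lookup a s < Poly_Mapping.lookup b s \<and> \<omega> s < \<omega> t"
proof (rule ccontr)
  assume no_pair: "\<not> ?thesis"
  define P where "P = {v. Poly_Mapping.lookup b v < Poly_Mapping.lookup a v}"
  define N where "N = {v. Poly_Mapping.lookup a v < Poly_Mapping.lookup b v}"
  have "N \<noteq> {}"
    using mdvd_mdeg_eq_imp_eq[of b a] assms(2,3) by (force simp: N_def mdvd_def not_less)
  obtain p where "p \<in> P"
    using mdvd_mdeg_eq_imp_eq[of a b] assms(2,3) by (force simp: P_def mdvd_def not_less)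
  define M where "M = Min (\<omega> ` N)"
  have M_le: "M \<le> \<omega> v" if "v \<in> N" for v
    unfolding M_def using that by simp
  have less_M: "\<omega> v < M" if "v \<in> P" for v
  proof -
    have "\<omega> v < \<omega> s" if "s \<in> N" for s
    proof -
      have "\<not> \<omega> s < \<omega> v"
        using no_pair \<open>v \<in> P\<close> that by (auto simp: P_def N_def)
      moreover have "\<omega> v \<noteq> \<omega> s"
        using \<open>v \<in> P\<close> that injD[OF assms(1)] by (force simp: P_def N_def)
      ultimately show ?thesis
        by simp
    qed
    then show ?thesis
      unfolding M_def using \<open>N \<noteq> {}\<close> by (simp add: Min_gr_iff)
  qed
  \<comment> \<open>the f v sum to \<open>(weight a - M deg a) - (weight b - M deg b)\<close>, none is positive and f p < 0\<close>
  define f where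
    "f v = (int (Poly_Mapping.lookup a v) - int (Poly_Mapping.lookup b v)) * (int (\<omega> v) - int M)" for v
  have "(\<Sum>v\<in>UNIV. f v) < (\<Sum>v\<in>(UNIV::'v set). 0)"
  proof (rule sum_strict_mono_ex1)
    show "\<forall>v\<in>UNIV. f v \<le> 0"
    proof
      fix v :: 'v
      consider "v \<in> P" | "v \<in> N" | "Poly_Mapping.lookup a v = Poly_Mapping.lookup b v"
        unfolding P_def N_def by fastforce
      then show "f v \<le> 0"
      proof cases
        case 1
        then show ?thesis
          using less_M[OF 1] unfolding f_def P_def by (simp add: mult_pos_neg less_imp_le)
      next
        case 2
        then show ?thesis
          using M_le[OF 2] unfolding f_def N_def by (simp add: mult_nonpos_nonneg)
      qed (simp add: f_def)
    qed
    show "\<exists>v\<in>UNIV. f v < 0"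
      using less_M[OF \<open>p \<in> P\<close>] \<open>p \<in> P\<close> unfolding f_def P_def
      by (intro bexI[of _ p]) (simp_all add: mult_pos_neg)
  qed simp
  moreover have "(\<Sum>v\<in>UNIV. f v) =
      int (weight \<omega> a) - int (weight \<omega> b) - int M * (int (mdeg a) - int (mdeg b))"
    by (simp add: f_def weight_def mdeg_eq_sum_UNIV algebra_simps sum_subtractf sum.distrib
        sum_distrib_left)
  ultimately show False
    using assms(2,4) by simp
qed

lemma sorted_desc_take_nth:
  fixes f :: "'a \<Rightarrow> 'b::linorder"
  assumes "sorted_wrt (\<lambda>x y. f y \<le> f x) bs" and "distinct bs" and "i < length bs"
  shows "bs ! i \<notin> set (take i bs)"
    and "\<forall>a\<in>set (take i bs). f (bs ! i) \<le> f a"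
    and "\<forall>a\<in>set bs. f (bs ! i) < f a \<longrightarrow> a \<in> set (take i bs)"
proof -
  show "bs ! i \<notin> set (take i bs)"
    using assms(2,3) by (auto simp: in_set_conv_nth nth_eq_iff_index_eq)
  show "\<forall>a\<in>set (take i bs). f (bs ! i) \<le> f a"
    using sorted_wrt_nth_less[OF assms(1)] assms(3) by (auto simp: in_set_conv_nth)
  show "\<forall>a\<in>set bs. f (bs ! i) < f a \<longrightarrow> a \<in> set (take i bs)"
  proof (intro ballI impI)
    fix a
    assume "a \<in> set bs" and less: "f (bs ! i) < f a"
    then obtain j where j: "j < length bs" "a = bs ! j"
      by (auto simp: in_set_conv_nth)
    have "j < i"
      using sorted_wrt_nth_less[OF assms(1), of i j] less j assms(3)
      by (cases j i rule: linorder_cases) auto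
    then show "a \<in> set (take i bs)"
      using j by (auto simp: in_set_conv_nth intro!: exI[of _ j])
  qed
qed

definition deg_mod :: "nat \<Rightarrow> nat \<Rightarrow> ('v \<Rightarrow>\<^sub>0 nat) set" where
  "deg_mod c u = {m. mdeg m mod c = u}"

definition standard_monomials :: "('v \<Rightarrow>\<^sub>0 nat) set \<Rightarrow> nat \<Rightarrow> ('v \<Rightarrow>\<^sub>0 nat) set" where
  "standard_monomials G u = {m. mdeg m = u \<and> m \<notin> UNIV + G}"

lemma veronese_part_eq: "veronese_part c u = (supported_in (deg_mod c u) :: ('v, 'k::field) mpoly set)"
  by (auto simp: veronese_part_def supported_in_def deg_mod_def)

lemma finite_standard_monomials: "finite (standard_monomials (G :: ('v::finite \<Rightarrow>\<^sub>0 nat) set) u)"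
  using finite_mdeg_eq[of u] by (rule rev_finite_subset) (auto simp: standard_monomials_def)

lemma mem_multiples_iff: "w \<in> UNIV + G \<longleftrightarrow> (\<exists>g\<in>G. g mdvd w)"
  by (auto simp: mdvd_iff elim!: set_plus_elim)

lemma multiples_mdvd_closed: "w \<in> UNIV + G \<Longrightarrow> w mdvd w' \<Longrightarrow> w' \<in> UNIV + G"
  by (meson mdvd_trans mem_multiples_iff)

lemma deg_mod_add:
  "(k :: 'v::finite \<Rightarrow>\<^sub>0 nat) \<in> deg_mod c 0 \<Longrightarrow> k' \<in> deg_mod c 0 \<Longrightarrow> k + k' \<in> deg_mod c 0"
  by (simp add: deg_mod_def mdeg_add mod_add_eq[symmetric])

lemma vspan_mon:
  "vspan c (supported_in J) (mon ` B) = (supported_in (deg_mod c 0 + B \<union> J) :: ('v, 'k::field) mpoly set)"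
  by (simp add: vspan_def veronese_part_eq lin_span_supported_in_mon set_plus_mp_supported_in)

lemma deg_mod_subset_generated:
  fixes G :: "('v::finite \<Rightarrow>\<^sub>0 nat) set"
  assumes "u < c"
  shows "deg_mod c u \<subseteq> deg_mod c 0 + standard_monomials G u \<union> (UNIV + G)"
proof
  fix m :: "'v \<Rightarrow>\<^sub>0 nat"
  assume "m \<in> deg_mod c u"
  then have m: "mdeg m mod c = u"
    by (simp add: deg_mod_def)
  then have "u \<le> mdeg m"
    by (metis mod_less_eq_dividend)
  then obtain b where b: "b mdvd m" "mdeg b = u"
    using exists_mdvd_between[of 0 m u] by (auto simp: mdvd_def)
  have "mdeg (m - b) + u = mdeg m"
    using mdeg_add[of "m - b" b] mdvd_diff_add[OF b(1)] b(2) by simp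
  then have "mdeg (m - b) = c * (mdeg m div c)"
    using div_mult_mod_eq[of "mdeg m" c] m by (simp add: mult.commute)
  then have "m - b \<in> deg_mod c 0"
    by (simp add: deg_mod_def)
  show "m \<in> deg_mod c 0 + standard_monomials G u \<union> (UNIV + G)"
  proof (cases "b \<in> UNIV + G")
    case True
    then show ?thesis
      using multiples_mdvd_closed[OF True b(1)] by blast
  next
    case False
    then have "b \<in> standard_monomials G u"
      using b(2) by (simp add: standard_monomials_def)
    then show ?thesis
      using set_plus_intro[OF \<open>m - b \<in> deg_mod c 0\<close>] mdvd_diff_add[OF b(1)] by fastforce
  qed
qed

lemma minimal_hom_generators_standard_monomials:
  fixes G :: "('v::finite \<Rightarrow>\<^sub>0 nat) set"
  assumes "u < c" and "set bs = standard_monomials G u" and "distinct bs"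
  shows "minimal_hom_generators c u (supported_in (UNIV + G) :: ('v, 'k::field) mpoly set) (map mon bs)"
  unfolding minimal_hom_generators_def
proof (intro conjI allI impI)
  show "\<forall>g\<in>set (map mon bs). (\<exists>e. homogeneous e g) \<and> (g :: ('v, 'k) mpoly) \<in> veronese_part c u"
    using assms(1,2) by (auto simp: homogeneous_def veronese_part_def standard_monomials_def keys_mon)
next
  show "veronese_part c u \<subseteq> vspan c (supported_in (UNIV + G)) (set (map mon bs) :: ('v, 'k) mpoly set)"
    using supported_in_mono[OF deg_mod_subset_generated[OF assms(1), of G]] assms(2)
    by (simp add: vspan_mon veronese_part_eq)
next
  fix i
  assume i: "i < length (map mon bs)"
  let ?others = "{bs ! j | j. j < length bs \<and> j \<noteq> i}"
  have others: "{map mon bs ! j | j. j < length (map mon bs) \<and> j \<noteq> i} = mon ` ?others"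
    by (auto simp: image_def) (metis nth_map)
  have bi: "bs ! i \<in> standard_monomials G u"
    using i assms(2) nth_mem by fastforce
  have "bs ! i \<notin> deg_mod c 0 + ?others"
  proof
    assume "bs ! i \<in> deg_mod c 0 + ?others"
    then obtain k j where kj: "bs ! i = k + bs ! j" "j < length bs" "j \<noteq> i"
      by (auto elim!: set_plus_elim)
    have "bs ! j \<in> standard_monomials G u"
      using kj(2) assms(2) nth_mem by fastforce
    then have "k = 0"
      using kj(1) bi mdeg_add[of k "bs ! j"] by (simp add: standard_monomials_def)
    then show False
      using kj i assms(3) by (simp add: nth_eq_iff_index_eq)
  qed
  then have "mon (bs ! i) \<notin> (vspan c (supported_in (UNIV + G))
      {map mon bs ! j | j. j < length (map mon bs) \<and> j \<noteq> i} :: ('v, 'k) mpoly set)"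
    using bi unfolding others vspan_mon by (simp add: standard_monomials_def)
  moreover have "mon (bs ! i) \<in> (veronese_part c u :: ('v, 'k) mpoly set)"
    using bi assms(1) by (simp add: veronese_part_eq deg_mod_def standard_monomials_def)
  ultimately show "\<not> veronese_part c u \<subseteq> (vspan c (supported_in (UNIV + G))
      {map mon bs ! j | j. j < length (map mon bs) \<and> j \<noteq> i} :: ('v, 'k) mpoly set)"
    by blast
qed

lemma colon_rep_map_mon:
  assumes "i < length bs"
  shows "colon_rep c (supported_in J) (map mon bs) i =
    (supported_in {w \<in> deg_mod c 0. w + bs ! i \<in> deg_mod c 0 + set (take i bs) \<union> J} :: ('v, 'k::field) mpoly set)"
proof -
  have "colon_rep c (supported_in J) (map mon bs) i = {r \<in> supported_in (deg_mod c 0).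
      r * mon (bs ! i) \<in> (supported_in (deg_mod c 0 + set (take i bs) \<union> J) :: ('v, 'k) mpoly set)}"
    using assms by (simp add: colon_rep_def veronese_part_eq take_map vspan_mon)
  then show ?thesis
    by (simp only: times_mon_in_supported_in)
qed

lemma ideal_rep_mon:
  "ideal_rep c (supported_in J) (mon ` W) =
    (supported_in (deg_mod c 0 \<inter> (deg_mod c 0 + W \<union> J)) :: ('v, 'k::field) mpoly set)"
  by (simp add: ideal_rep_def veronese_part_eq vspan_mon supported_in_Int)

lemma Xset_eq: "Xset c (supported_in (UNIV + G)) = (mon ` standard_monomials G c :: ('v, 'k::field) mpoly set)"
  by (auto simp: Xset_def standard_monomials_def)

lemma degree_c_divisor_if_multiple:
  fixes w b :: "'v::finite \<Rightarrow>\<^sub>0 nat"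
  assumes G_deg: "\<forall>g\<in>G. mdeg g \<le> c + 1"
    and w: "w \<in> deg_mod c 0" "w \<notin> UNIV + G" and b: "b \<notin> UNIV + G"
    and wb: "w + b \<in> UNIV + G"
  shows "\<exists>y. y mdvd w \<and> mdeg y = c \<and> y + b \<in> UNIV + G"
proof -
  obtain g where g: "g \<in> G" "g mdvd w + b"
    using wb by (auto simp: mem_multiples_iff)
  define h where "h = g - b"
  have lookup_h: "Poly_Mapping.lookup h v = Poly_Mapping.lookup g v - Poly_Mapping.lookup b v" for v
    by (simp add: h_def lookup_minus)
  have "h mdvd w"
    using g(2) by (auto simp: mdvd_def lookup_h lookup_add le_diff_conv)
  have "h mdvd g"
    by (simp add: mdvd_def lookup_h)
  have "h \<noteq> g"
    using \<open>h mdvd w\<close> g(1) w(2) by (auto simp: mem_multiples_iff)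
  then have "mdeg h \<le> c"
    using mdvd_mdeg_le[OF \<open>h mdvd g\<close>] mdvd_mdeg_eq_imp_eq[OF \<open>h mdvd g\<close>] G_deg g(1) by fastforce
  have "h \<noteq> 0"
  proof
    assume "h = 0"
    then have "Poly_Mapping.lookup g v \<le> Poly_Mapping.lookup b v" for v
      using lookup_h[of v] by simp
    then have "g mdvd b"
      by (simp add: mdvd_def)
    then show False
      using g(1) b by (auto simp: mem_multiples_iff)
  qed
  with \<open>h mdvd w\<close> have "w \<noteq> 0"
    by (auto simp: mdvd_def intro: poly_mapping_eqI)
  then have "c \<le> mdeg w"
    using w(1) by (intro dvd_mdeg_imp_le) (auto simp: deg_mod_def)
  then obtain y where y: "h mdvd y" "y mdvd w" "mdeg y = c"
    using exists_mdvd_between[OF \<open>h mdvd w\<close> \<open>mdeg h \<le> c\<close>] by blast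
  have "g mdvd y + b"
    using y(1) by (auto simp: mdvd_def lookup_h lookup_add le_diff_conv)
  then show ?thesis
    using y(2,3) g(1) by (auto simp: mem_multiples_iff)
qed

lemma degree_c_divisor_if_earlier:
  fixes w b :: "'v::finite \<Rightarrow>\<^sub>0 nat"
  assumes "inj \<omega>" and "1 \<le> c" and w: "w \<in> deg_mod c 0"
    and b: "b \<in> standard_monomials G u" and B: "B \<subseteq> standard_monomials G u" "b \<notin> B"
    and B_before: "\<forall>a\<in>B. weight \<omega> b \<le> weight \<omega> a"
    and B_after: "\<forall>a\<in>standard_monomials G u. weight \<omega> b < weight \<omega> a \<longrightarrow> a \<in> B"
    and wb: "w + b \<in> deg_mod c 0 + B"
  shows "\<exists>y. y mdvd w \<and> mdeg y = c \<and> y + b \<in> deg_mod c 0 + B \<union> (UNIV + G)"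
proof -
  obtain k a where ka: "w + b = k + a" "a \<in> B"
    using wb by (auto elim: set_plus_elim)
  have "a \<noteq> b" "mdeg a = mdeg b"
    using ka(2) B b by (auto simp: standard_monomials_def)
  then obtain t s where ts: "Poly_Mapping.lookup b t < Poly_Mapping.lookup a t"
      "Poly_Mapping.lookup a s < Poly_Mapping.lookup b s" "\<omega> s < \<omega> t"
    using exists_exchange_pair[OF assms(1)] B_before ka(2) by blast
  define x_t where "x_t = Poly_Mapping.single t (1::nat)"
  define x_s where "x_s = Poly_Mapping.single s (1::nat)"
  have deg_x: "mdeg x_t = 1" "mdeg x_s = 1" and weight_x: "weight \<omega> x_t = \<omega> t" "weight \<omega> x_s = \<omega> s"
    by (simp_all only: x_t_def x_s_def mdeg_single_1 weight_single_1)
  have "0 < Poly_Mapping.lookup w t"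
    using arg_cong[OF ka(1), of "\<lambda>m. Poly_Mapping.lookup m t"] ts(1) by (simp add: lookup_add)
  then have "x_t mdvd w" and "w \<noteq> 0"
    by (auto simp: mdvd_def x_t_def lookup_single when_def)
  then have "c \<le> mdeg w"
    using w by (intro dvd_mdeg_imp_le) (auto simp: deg_mod_def)
  moreover have "mdeg x_t \<le> c"
    using deg_x assms(2) by simp
  ultimately obtain y where y: "x_t mdvd y" "y mdvd w" "mdeg y = c"
    using exists_mdvd_between[OF \<open>x_t mdvd w\<close>] by blast
  \<comment> \<open>the exchanged monomial \<open>b x_t / x_s\<close>\<close>
  define b' where "b' = (b - x_s) + x_t"
  have "x_s mdvd b"
    using ts(2) by (auto simp: mdvd_def x_s_def lookup_single when_def)
  then have b_eq: "b = (b - x_s) + x_s"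
    by (simp add: mdvd_diff_add)
  have "mdeg b' = u"
    using b b_eq mdeg_add[of "b - x_s" x_s] deg_x by (simp add: b'_def mdeg_add standard_monomials_def)
  have "weight \<omega> b < weight \<omega> b'"
    using ts(3) weight_add[of \<omega> "b - x_s" x_s] b_eq weight_x by (simp add: b'_def weight_add)
  have "b' mdvd y + b"
    unfolding mdvd_def
  proof
    fix v
    have "Poly_Mapping.lookup x_t v \<le> Poly_Mapping.lookup y v"
      using y(1) by (simp add: mdvd_def)
    then show "Poly_Mapping.lookup b' v \<le> Poly_Mapping.lookup (y + b) v"
      by (simp add: b'_def lookup_add lookup_minus)
  qed
  show ?thesis
  proof (cases "b' \<in> UNIV + G")
    case True
    then show ?thesis
      using y multiples_mdvd_closed[OF True \<open>b' mdvd y + b\<close>] by blast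
  next
    case False
    then have "b' \<in> B"
      using B_after \<open>mdeg b' = u\<close> \<open>weight \<omega> b < weight \<omega> b'\<close> by (auto simp: standard_monomials_def)
    have "mdeg (y + b - b') + u = c + u"
      using mdvd_diff_add[OF \<open>b' mdvd y + b\<close>] mdeg_add[of "y + b - b'" b'] mdeg_add[of y b] b y(3)
        \<open>mdeg b' = u\<close> by (simp add: standard_monomials_def)
    then have "y + b - b' \<in> deg_mod c 0"
      by (simp add: deg_mod_def)
    then have "y + b - b' + b' \<in> deg_mod c 0 + B"
      using \<open>b' \<in> B\<close> by (rule set_plus_intro)
    then have "y + b \<in> deg_mod c 0 + B"
      using mdvd_diff_add[OF \<open>b' mdvd y + b\<close>] by simp
    then show ?thesis
      using y by blast
  qed
qed

lemma colon_exponents_eq: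
  fixes G :: "('v::finite \<Rightarrow>\<^sub>0 nat) set"
  assumes G_deg: "\<forall>g\<in>G. mdeg g \<le> c + 1" and "1 \<le> c" and "inj \<omega>"
    and b: "b \<in> standard_monomials G u" and B: "B \<subseteq> standard_monomials G u" "b \<notin> B"
    and B_before: "\<forall>a\<in>B. weight \<omega> b \<le> weight \<omega> a"
    and B_after: "\<forall>a\<in>standard_monomials G u. weight \<omega> b < weight \<omega> a \<longrightarrow> a \<in> B"
  defines "W \<equiv> {y \<in> standard_monomials G c. y + b \<in> deg_mod c 0 + B \<union> (UNIV + G)}"
  shows "{w \<in> deg_mod c 0. w + b \<in> deg_mod c 0 + B \<union> (UNIV + G)} =
    deg_mod c 0 \<inter> (deg_mod c 0 + W \<union> (UNIV + G))"
proof (intro set_eqI iffI)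
  fix w
  assume "w \<in> deg_mod c 0 \<inter> (deg_mod c 0 + W \<union> (UNIV + G))"
  then have w: "w \<in> deg_mod c 0" "w \<in> deg_mod c 0 + W \<union> (UNIV + G)"
    by auto
  have "w + b \<in> deg_mod c 0 + B \<union> (UNIV + G)"
  proof (cases "w \<in> UNIV + G")
    case True
    then show ?thesis
      using multiples_mdvd_closed[OF True, of "w + b"] by (simp add: add.commute)
  next
    case False
    then obtain k y where ky: "w = k + y" "k \<in> deg_mod c 0" "y \<in> W"
      using w(2) by (auto elim: set_plus_elim)
    then have "y + b \<in> deg_mod c 0 + B \<union> (UNIV + G)"
      by (simp add: W_def)
    moreover have wb: "w + b = k + (y + b)"
      using ky(1) by (simp add: add.assoc)
    ultimately show ?thesis
    proof (elim UnE)
      assume "y + b \<in> deg_mod c 0 + B"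
      then obtain k' a where "y + b = k' + a" "k' \<in> deg_mod c 0" "a \<in> B"
        by (auto elim: set_plus_elim)
      then show ?thesis
        using wb set_plus_intro[OF deg_mod_add[OF ky(2) \<open>k' \<in> deg_mod c 0\<close>] \<open>a \<in> B\<close>]
        by (simp add: add.assoc)
    next
      assume "y + b \<in> UNIV + G"
      then show ?thesis
        using multiples_mdvd_closed[of "y + b" G "w + b"] wb by simp
    qed
  qed
  then show "w \<in> {w \<in> deg_mod c 0. w + b \<in> deg_mod c 0 + B \<union> (UNIV + G)}"
    using w(1) by simp
next
  fix w
  assume "w \<in> {w \<in> deg_mod c 0. w + b \<in> deg_mod c 0 + B \<union> (UNIV + G)}"
  then have w: "w \<in> deg_mod c 0" and wb: "w + b \<in> deg_mod c 0 + B \<union> (UNIV + G)"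
    by auto
  have "w \<in> deg_mod c 0 + W \<union> (UNIV + G)"
  proof (cases "w \<in> UNIV + G")
    case False
    have "b \<notin> UNIV + G"
      using b by (simp add: standard_monomials_def)
    then obtain y where y: "y mdvd w" "mdeg y = c" "y + b \<in> deg_mod c 0 + B \<union> (UNIV + G)"
      using wb degree_c_divisor_if_multiple[OF G_deg w False]
        degree_c_divisor_if_earlier[OF assms(3,2) w b B B_before B_after] by blast
    then have "y \<in> W"
      using False multiples_mdvd_closed[of y G w] by (auto simp: W_def standard_monomials_def)
    have "mdeg (w - y) + c = mdeg w"
      using mdeg_add[of "w - y" y] mdvd_diff_add[OF y(1)] y(2) by simp
    then have "w - y \<in> deg_mod c 0"
      using w mod_add_self2[of "mdeg (w - y)" c] by (simp add: deg_mod_def)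
    then have "w - y + y \<in> deg_mod c 0 + W"
      using \<open>y \<in> W\<close> by (rule set_plus_intro)
    then show ?thesis
      using mdvd_diff_add[OF y(1)] by simp
  qed simp
  then show "w \<in> deg_mod c 0 \<inter> (deg_mod c 0 + W \<union> (UNIV + G))"
    using w by simp
qed

lemma linear_quotients_standard_monomials:
  fixes G :: "('v::finite \<Rightarrow>\<^sub>0 nat) set"
  assumes G_deg: "\<forall>g\<in>G. mdeg g \<le> c + 1" and "1 \<le> c" and "inj \<omega>"
    and bs: "set bs = standard_monomials G u" "distinct bs" "sorted_wrt (\<lambda>x y. weight \<omega> y \<le> weight \<omega> x) bs"
    and i: "i < length bs"
  shows "\<exists>Y\<subseteq>Xset c (supported_in (UNIV + G)).
    colon_rep c (supported_in (UNIV + G)) (map mon bs) i = (ideal_rep c (supported_in (UNIV + G)) Y :: ('v, 'k::field) mpoly set)"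
proof -
  let ?W = "{y \<in> standard_monomials G c. y + bs ! i \<in> deg_mod c 0 + set (take i bs) \<union> (UNIV + G)}"
  have "bs ! i \<in> standard_monomials G u" "set (take i bs) \<subseteq> standard_monomials G u"
    using bs(1) i set_take_subset[of i bs] by auto
  then have "colon_rep c (supported_in (UNIV + G)) (map mon bs) i =
      (ideal_rep c (supported_in (UNIV + G)) (mon ` ?W) :: ('v, 'k) mpoly set)"
    using colon_exponents_eq[OF G_deg assms(2,3)] sorted_desc_take_nth[OF bs(3,2) i] bs(1) i
    by (simp add: colon_rep_map_mon ideal_rep_mon)
  moreover have "mon ` ?W \<subseteq> (Xset c (supported_in (UNIV + G)) :: ('v, 'k) mpoly set)"
    by (auto simp: Xset_eq)
  ultimately show ?thesis
    by blast
qed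

theorem proposition3p18:
  fixes G :: "('v::finite \<Rightarrow>\<^sub>0 nat) set"
    and I :: "('v, 'k::field) mpoly set"
    and c d u :: nat
  assumes "\<forall>m\<in>G. mdeg m \<le> d"
    and "I = lin_span UNIV (mon ` G)"
    and "c \<ge> 1" and "c + 1 \<ge> d"
    and "u < c"
  shows "veronese_linear_quotients c u I"
proof -
  have G_deg: "\<forall>g\<in>G. mdeg g \<le> c + 1"
    using assms(1,4) by fastforce
  have I: "I = supported_in (UNIV + G)"
    using assms(2) lin_span_supported_in_mon[of UNIV G] by simp
  obtain \<omega> :: "'v \<Rightarrow> nat" where "inj \<omega>"
    using finite_imp_inj_to_nat_seg[of "UNIV :: 'v set"] by auto
  obtain xs where xs: "set xs = standard_monomials G u" "distinct xs"
    using finite_distinct_list[OF finite_standard_monomials] by blast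
  define bs where "bs = rev (sort_key (weight \<omega>) xs)"
  have bs: "set bs = standard_monomials G u" "distinct bs" "sorted_wrt (\<lambda>x y. weight \<omega> y \<le> weight \<omega> x) bs"
    using xs sorted_sort_key[of "weight \<omega>" xs] by (simp_all add: bs_def sorted_wrt_rev sorted_map)
  show ?thesis
    unfolding veronese_linear_quotients_def I
    using minimal_hom_generators_standard_monomials[OF assms(5) bs(1,2)]
      linear_quotients_standard_monomials[OF G_deg assms(3) \<open>inj \<omega>\<close> bs]
    by (metis length_map)
qed

end
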